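(* Let $B\subseteq C$ be finite sets of names, let $a\in(\mathbb{A}\setminus B)\cup\{*\}$, let $\phi$ be a bar formula, let $S$ be a context, and let $v$ be a bar string (with $v\in[S]$ and $\mathrm{FN}(\phi)\subseteq S$). Suppose that (i) if $a\neq *$, then every name having a free occurrence in $v$ before the first free occurrence of $a$ in $v$ is contained in $B$; and (ii) if some name occurring freely in $v$ is not in $B$ and the first such name $d$ lies in $\mathrm{FN}(\phi)$, then $d\in C$. Then for all $n$ with $|v|<n$: $S,v\models\phi$ iff $S,v\models\phi^B_C(a)_n$.
   Context: Names $\mathbb{A}$ countably infinite; $*\notin\mathbb{A}$ a marker. $G$ finite permutations; $[\mathbb{A}]X$ abstraction sets ($\mathbb{A}\times X$ modulo $(a,x)\sim(b,y)$ iff $(a\,c)\cdot x=(b\,c)\cdot y$ for $c$ outside the supports; class $\langle a\rangle x$). $\overline{\mathbb{A}}=\mathbb{A}\cup\{|a\}$; bar strings are words over it; $\equiv_\alpha$ least equivalence with $w|av\equiv_\alpha w|bu$ whenever $\langle a\rangle v=\langle b\rangle u$. An occurrence of a plain name $a$ is free if no $|a$ occurs to its left; $\mathrm{FN}(w)$; $[S]=\{w\mid\mathrm{FN}(w)\subseteq S\}$; $|v|$ is the length. Bar formulae $\phi::=\epsilon\mid\neg\epsilon\mid\phi\wedge\phi\mid\phi\vee\phi\mid\Diamond_\sigma\phi\mid\Box_\sigma\phi\mid X\mid\mu X.\phi$ ($\sigma\in\overline{\mathbb{A}}$), fixpoint variables guarded by modalities, implicitly annotated with the free names of their binding $\mu$-expression;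 $\top=\epsilon\vee\neg\epsilon$, $\bot=\epsilon\wedge\neg\epsilon$; $\mathrm{FN}(\phi)$: names $a$ with $\Diamond_a/\Box_a$ outside the scope of $\Diamond_{|a}/\Box_{|a}$. Semantics ($S$ finite, $\mathrm{FN}(\phi)\subseteq S$, $w\in[S]$): Booleans usual; $\epsilon$: $w$ empty; $\neg\epsilon$: nonempty; $\mu X.\phi$: $\phi[\mu X.\phi/X]$; $\Diamond_a\phi$: $w=av$, $S,v\models\phi$; $\Box_a\phi$: $w=av\Rightarrow S,v\models\phi$; $\Diamond_{|a}\phi$: exist $\psi,v,b$ with $w\equiv_\alpha|bv$, $\langle a\rangle\phi=\langle b\rangle\psi$, $S\cup\{b\},v\models\psi$; $\Box_{|a}\phi$: for all such $\psi,v,b$, $S\cup\{b\},v\models\psi$. Restriction: for $B\subseteq C$, $a\in(\mathbb{A}\setminus B)\cup\{*\}$, define $\phi^B_C(a)_0=\top$ and for $n>0$: $\epsilon^B_C(a)_n=\epsilon$; $(\neg\epsilon)^B_C(a)_n=\neg\epsilon$; $(\psi\wedge\chi)^B_C(a)_n=\psi^B_C(a)_n\wedge\chi^B_C(a)_n$, similarly for $\vee$; $(\Diamond_{|b}\psi)^B_C(a)_n=\Diamond_{|b}(\psi^{B\cup\{b\}}_{C\cup\{b\}}(a)_{n-1})$, same with $\Box_{|b}$; $(\mu X.\psi)^B_C(a)_n=(\psi[\mu X.\psi/X])^B_C(a)_n$; $(\Diamond_b\psi)^B_C(a)_n$ is $\bot$ if $b\notin C$, $\Diamond_b(\psi^B_C(a)_{n-1})$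 if $b\in B$, and $\Diamond_b(\psi^\emptyset_{\mathrm{FN}(\psi)}( * )_{n-1})$ if $b\in C\setminus B$; $(\Box_b\psi)^B_C(a)_n$ is $\epsilon\vee\Diamond_{|c}\top\vee\bigvee_{d\in B\cup\{a\}}\Diamond_d\top$ if $b\notin C,a\neq *$; $\Box_b(\psi^\emptyset_{\mathrm{FN}(\psi)}( * )_{n-1})$ if $b\notin C,a=*$; $\Box_b(\psi^B_C(a)_{n-1})$ if $b\in B$; and if $b\in C\setminus B$ it is: $\Box_b(\psi^\emptyset_{\mathrm{FN}(\psi)}( * )_{n-1})$ if $a=*$; $\epsilon\vee\Diamond_{|c}\top\vee\bigvee_{d\in B}\Diamond_d\top\vee\Diamond_a(\psi^\emptyset_{\mathrm{FN}(\psi)}( * )_{n-1})$ if $a=b$; $\epsilon\vee\Diamond_{|c}\top\vee\bigvee_{d\in B\cup\{a\}}\Diamond_d\top$ if $*\neq a\neq b$. (Here $c$ is any name.) *)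

theory Defs
  imports Main
begin

(* Names: the countably infinite set of names is modelled by nat.
   The marker * is modelled by None :: nat option (names a are Some a). *)
type_synonym name = nat

datatype bl = Pl name | Br name   (* Pl a = plain name a,  Br a = bar name |a *)

type_synonym bstr = "bl list"

definition swap :: "name \<Rightarrow> name \<Rightarrow> name \<Rightarrow> name" where
  "swap a b c = (if c = a then b else if c = b then a else c)"

fun perm_bl :: "name \<Rightarrow> name \<Rightarrow> bl \<Rightarrow> bl" where
  "perm_bl a b (Pl c) = Pl (swap a b c)"
| "perm_bl a b (Br c) = Br (swap a b c)"

definition perm_str :: "name \<Rightarrow> name \<Rightarrow> bstr \<Rightarrow> bstr" where
  "perm_str a b w = map (perm_bl a b) w"

fun name_of :: "bl \<Rightarrow> name" where
  "name_of (Pl c) = c" | "name_of (Br c) = c"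

definition names_str :: "bstr \<Rightarrow> name set" where
  "names_str w = name_of ` set w"

definition abs_eq_str :: "name \<Rightarrow> bstr \<Rightarrow> name \<Rightarrow> bstr \<Rightarrow> bool" where
  "abs_eq_str a v b u \<longleftrightarrow>
     (\<exists>c. c \<notin> {a, b} \<union> names_str v \<union> names_str u \<and> perm_str a c v = perm_str b c u)"

inductive alpha :: "bstr \<Rightarrow> bstr \<Rightarrow> bool" where
  alpha_base: "abs_eq_str a v b u \<Longrightarrow> alpha (w @ Br a # v) (w @ Br b # u)"
| alpha_refl: "alpha w w"
| alpha_sym: "alpha w u \<Longrightarrow> alpha u w"
| alpha_trans: "alpha w u \<Longrightarrow> alpha u x \<Longrightarrow> alpha w x"

fun FN_str :: "bstr \<Rightarrow> name set" where
  "FN_str [] = {}"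
| "FN_str (Pl a # w) = insert a (FN_str w)"
| "FN_str (Br a # w) = FN_str w - {a}"

definition free_occ :: "bstr \<Rightarrow> nat \<Rightarrow> name \<Rightarrow> bool" where
  "free_occ w i d \<longleftrightarrow> i < length w \<and> w ! i = Pl d \<and> Br d \<notin> set (take i w)"

type_synonym fvar = nat

datatype form =
    Eps
  | NEps
  | And form form
  | Or form form
  | Dia bl form
  | Box bl form
  | Var fvar
  | Mu fvar form

definition Top :: form where "Top = Or Eps NEps"
definition Bot :: form where "Bot = And Eps NEps"

primrec perm_form :: "name \<Rightarrow> name \<Rightarrow> form \<Rightarrow> form" where
  "perm_form a b Eps = Eps"
| "perm_form a b NEps = NEps"
| "perm_form a b (And p q) = And (perm_form a b p) (perm_form a b q)"
| "perm_form a b (Or p q) = Or (perm_form a b p) (perm_form a b q)"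
| "perm_form a b (Dia l p) = Dia (perm_bl a b l) (perm_form a b p)"
| "perm_form a b (Box l p) = Box (perm_bl a b l) (perm_form a b p)"
| "perm_form a b (Var X) = Var X"
| "perm_form a b (Mu X p) = Mu X (perm_form a b p)"

lemma size_perm_form[simp]: "size (perm_form a b p) = size p"
  by (induction p) auto

primrec names_form :: "form \<Rightarrow> name set" where
  "names_form Eps = {}"
| "names_form NEps = {}"
| "names_form (And p q) = names_form p \<union> names_form q"
| "names_form (Or p q) = names_form p \<union> names_form q"
| "names_form (Dia l p) = insert (name_of l) (names_form p)"
| "names_form (Box l p) = insert (name_of l) (names_form p)"
| "names_form (Var X) = {}"
| "names_form (Mu X p) = names_form p"

primrec FN :: "form \<Rightarrow> name set" where
  "FN Eps = {}"
| "FN NEps = {}"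
| "FN (And p q) = FN p \<union> FN q"
| "FN (Or p q) = FN p \<union> FN q"
| "FN (Dia l p) = (case l of Pl a \<Rightarrow> insert a (FN p) | Br a \<Rightarrow> FN p - {a})"
| "FN (Box l p) = (case l of Pl a \<Rightarrow> insert a (FN p) | Br a \<Rightarrow> FN p - {a})"
| "FN (Var X) = {}"
| "FN (Mu X p) = FN p"

primrec fv :: "form \<Rightarrow> fvar set" where
  "fv Eps = {}"
| "fv NEps = {}"
| "fv (And p q) = fv p \<union> fv q"
| "fv (Or p q) = fv p \<union> fv q"
| "fv (Dia l p) = fv p"
| "fv (Box l p) = fv p"
| "fv (Var X) = {X}"
| "fv (Mu X p) = fv p - {X}"

primrec unguarded :: "fvar \<Rightarrow> form \<Rightarrow> bool" where
  "unguarded X Eps = False"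
| "unguarded X NEps = False"
| "unguarded X (And p q) = (unguarded X p \<or> unguarded X q)"
| "unguarded X (Or p q) = (unguarded X p \<or> unguarded X q)"
| "unguarded X (Dia l p) = False"
| "unguarded X (Box l p) = False"
| "unguarded X (Var Y) = (Y = X)"
| "unguarded X (Mu Y p) = (Y \<noteq> X \<and> unguarded X p)"

primrec guarded :: "form \<Rightarrow> bool" where
  "guarded Eps = True"
| "guarded NEps = True"
| "guarded (And p q) = (guarded p \<and> guarded q)"
| "guarded (Or p q) = (guarded p \<and> guarded q)"
| "guarded (Dia l p) = guarded p"
| "guarded (Box l p) = guarded p"
| "guarded (Var X) = True"
| "guarded (Mu X p) = (\<not> unguarded X p \<and> guarded p)"

definition bar_formula :: "form \<Rightarrow> bool" where
  "bar_formula p \<longleftrightarrow> fv p = {} \<and> guarded p"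

definition fresh :: "name set \<Rightarrow> name" where
  "fresh A = (LEAST c. c \<notin> A)"

(* capture-avoiding substitution  p[t/X]; bar binders |b with b free in t are renamed
   (this is what the implicit annotation of fixpoint variables achieves) *)
function subst :: "form \<Rightarrow> fvar \<Rightarrow> form \<Rightarrow> form" where
  "subst t X Eps = Eps"
| "subst t X NEps = NEps"
| "subst t X (And p q) = And (subst t X p) (subst t X q)"
| "subst t X (Or p q) = Or (subst t X p) (subst t X q)"
| "subst t X (Dia (Pl b) p) = Dia (Pl b) (subst t X p)"
| "subst t X (Box (Pl b) p) = Box (Pl b) (subst t X p)"
| "subst t X (Dia (Br b) p) =
     (if b \<in> FN t then
        (let c = fresh (insert b (names_form p \<union> names_form t))
         in Dia (Br c) (subst t X (perm_form b c p)))
      else Dia (Br b) (subst t X p))"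
| "subst t X (Box (Br b) p) =
     (if b \<in> FN t then
        (let c = fresh (insert b (names_form p \<union> names_form t))
         in Box (Br c) (subst t X (perm_form b c p)))
      else Box (Br b) (subst t X p))"
| "subst t X (Var Y) = (if Y = X then t else Var Y)"
| "subst t X (Mu Y p) = (if Y = X then Mu Y p else Mu Y (subst t X p))"
  by pat_completeness auto
termination
  by (relation "measure (\<lambda>(t, X, p). size p)") auto

definition abs_eq_form :: "name \<Rightarrow> form \<Rightarrow> name \<Rightarrow> form \<Rightarrow> bool" where
  "abs_eq_form a p b q \<longleftrightarrow>
     (\<exists>c. c \<notin> {a, b} \<union> names_form p \<union> names_form q \<and> perm_form a c p = perm_form b c q)"

(* S, w |= phi.  The paper's recursive definition is well-founded for (closed, guarded)
   bar formulae; we take the least relation closed under the clauses, which coincides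
   with it on bar formulae. *)
inductive sat :: "name set \<Rightarrow> bstr \<Rightarrow> form \<Rightarrow> bool" where
  sat_Eps: "sat S [] Eps"
| sat_NEps: "w \<noteq> [] \<Longrightarrow> sat S w NEps"
| sat_And: "sat S w p \<Longrightarrow> sat S w q \<Longrightarrow> sat S w (And p q)"
| sat_Or1: "sat S w p \<Longrightarrow> sat S w (Or p q)"
| sat_Or2: "sat S w q \<Longrightarrow> sat S w (Or p q)"
| sat_Mu: "sat S w (subst (Mu X p) X p) \<Longrightarrow> sat S w (Mu X p)"
| sat_DiaPl: "sat S v p \<Longrightarrow> sat S (Pl a # v) (Dia (Pl a) p)"
| sat_BoxPl: "(\<forall>v. w = Pl a # v \<longrightarrow> sat S v p) \<Longrightarrow> sat S w (Box (Pl a) p)"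
| sat_DiaBr: "alpha w (Br b # v) \<Longrightarrow> abs_eq_form a p b q \<Longrightarrow> sat (insert b S) v q
               \<Longrightarrow> sat S w (Dia (Br a) p)"
| sat_BoxBr: "(\<forall>q v b. alpha w (Br b # v) \<and> abs_eq_form a p b q \<longrightarrow> sat (insert b S) v q)
               \<Longrightarrow> sat S w (Box (Br a) p)"

(* unguarded size, used as termination measure *)
primrec ug :: "form \<Rightarrow> nat" where
  "ug Eps = 1"
| "ug NEps = 1"
| "ug (And p q) = 1 + ug p + ug q"
| "ug (Or p q) = 1 + ug p + ug q"
| "ug (Dia l p) = 1"
| "ug (Box l p) = 1"
| "ug (Var X) = 1"
| "ug (Mu X p) = 1 + ug p"

lemma ug_subst: "\<not> unguarded X p \<Longrightarrow> ug (subst t X p) = ug p"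
  by (induction t X p rule: subst.induct) (auto simp: Let_def)

definition Disj :: "form list \<Rightarrow> form" where
  "Disj ps = foldr Or ps Bot"

definition DiaSet :: "name set \<Rightarrow> form" where
  "DiaSet D = Disj (map (\<lambda>d. Dia (Pl d) Top) (sorted_list_of_set D))"

(* Dia_{|c} Top for an arbitrary name c; we take c = 0 *)
definition DiaBarTop :: form where "DiaBarTop = Dia (Br 0) Top"

(* name for a bound bar name b: b itself, or a fresh name if b clashes with B, C, a
   (bar formulae are taken up to alpha-equivalence) *)
definition bind_name :: "name set \<Rightarrow> name set \<Rightarrow> name option \<Rightarrow> name \<Rightarrow> form \<Rightarrow> name" where
  "bind_name B C a b p =
     (if b \<in> B \<union> C \<union> set_option a then fresh (B \<union> C \<union> set_option a \<union> insert b (names_form p))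
      else b)"

(* restr B C a n phi  =  phi^B_C(a)_n ;  a = None encodes the marker * *)
function restr :: "name set \<Rightarrow> name set \<Rightarrow> name option \<Rightarrow> nat \<Rightarrow> form \<Rightarrow> form" where
  "restr B C a 0 p = Top"
| "restr B C a (Suc m) Eps = Eps"
| "restr B C a (Suc m) NEps = NEps"
| "restr B C a (Suc m) (And p q) = And (restr B C a (Suc m) p) (restr B C a (Suc m) q)"
| "restr B C a (Suc m) (Or p q) = Or (restr B C a (Suc m) p) (restr B C a (Suc m) q)"
| "restr B C a (Suc m) (Dia (Br b) p) =
     (let c = bind_name B C a b p
      in Dia (Br c) (restr (insert c B) (insert c C) a m (perm_form b c p)))"
| "restr B C a (Suc m) (Box (Br b) p) =
     (let c = bind_name B C a b p
      in Box (Br c) (restr (insert c B) (insert c C) a m (perm_form b c p)))"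
| "restr B C a (Suc m) (Mu X p) =
     (if \<not> unguarded X p then restr B C a (Suc m) (subst (Mu X p) X p) else Top)"
| "restr B C a (Suc m) (Var X) = Top"
| "restr B C a (Suc m) (Dia (Pl b) p) =
     (if b \<notin> C then Bot
      else if b \<in> B then Dia (Pl b) (restr B C a m p)
      else Dia (Pl b) (restr {} (FN p) None m p))"
| "restr B C a (Suc m) (Box (Pl b) p) =
     (if b \<notin> C then
        (if a \<noteq> None then Or Eps (Or DiaBarTop (DiaSet (B \<union> set_option a)))
         else Box (Pl b) (restr {} (FN p) None m p))
      else if b \<in> B then Box (Pl b) (restr B C a m p)
      else if a = None then Box (Pl b) (restr {} (FN p) None m p)
      else if a = Some b then
        Or Eps (Or DiaBarTop (Or (DiaSet B) (Dia (Pl b) (restr {} (FN p) None m p))))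
      else Or Eps (Or DiaBarTop (DiaSet (B \<union> set_option a))))"
  by pat_completeness auto
termination
  by (relation "measures [\<lambda>(B, C, a, n, p). n, \<lambda>(B, C, a, n, p). ug p]")
     (auto simp: ug_subst)

end

theory Submission
  imports Defs
begin

(*
  The proof is an induction along the recursion of restr (on n, and on the unguarded size for
  an unfolded fixpoint) that carries conditions (i) and (ii) along the part of v still to be
  read. At a plain modality the two conditions determine which plain names can head the word,
  and these are exactly the case distinctions made by the restriction. At a bar modality the
  rest of the word is only determined up to alpha-equivalence: it is read as |d v' with d fresh
  for everything in sight, and the binder chosen by restr is renamed to d, after which (i) and
  (ii) hold for the renamed suffix. This uses that satisfaction is invariant under bijective
  renamings of names and under alpha-equivalence of formulae. Since fixpoints are satisfied
  through their unfoldings, that in turn needs capture-avoiding substitution to commute with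
  renaming, which it does only up to alpha-equivalence.
*)

section \<open>Renaming names\<close>

lemma swap_simps [simp]:
  "swap a b a = b" "swap a b b = a" "x \<noteq> a \<Longrightarrow> x \<noteq> b \<Longrightarrow> swap a b x = x"
  "swap a b (swap a b x) = x" "swap a b x = b \<longleftrightarrow> x = a" "swap a b x = a \<longleftrightarrow> x = b"
  by (auto simp: swap_def)

lemma swap_self [simp]: "swap a a = id"
  by (rule ext) (simp add: swap_def)

lemma swap_comp_swap [simp]: "swap a b \<circ> swap a b = id" "swap a b \<circ> (swap a b \<circ> f) = f"
  by (rule ext, simp)+

lemma bij_swap [simp]: "bij (swap a b)"
  by (metis bij_betw_def inj_def surj_def swap_simps(4))

lemma inj_swap [simp]: "inj (swap a b)"
  by (simp add: bij_is_inj)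

lemma swap_conj_apply: "inj f \<Longrightarrow> f (swap a b x) = swap (f a) (f b) (f x)"
  by (auto simp: swap_def inj_eq)

lemma swap_conj: "inj f \<Longrightarrow> f \<circ> swap a b = swap (f a) (f b) \<circ> f"
  by (rule ext) (simp add: swap_conj_apply)

lemma obtain_fresh_name: "(\<And>d :: name. d \<notin> A \<Longrightarrow> thesis) \<Longrightarrow> finite A \<Longrightarrow> thesis"
  using ex_new_if_finite infinite_UNIV_nat by blast

lemma fresh_notin: "finite A \<Longrightarrow> fresh A \<notin> A"
  unfolding fresh_def using ex_new_if_finite[OF infinite_UNIV_nat] by (metis LeastI_ex)

primrec rename_bl :: "(name \<Rightarrow> name) \<Rightarrow> bl \<Rightarrow> bl" where
  "rename_bl f (Pl x) = Pl (f x)"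
| "rename_bl f (Br x) = Br (f x)"

abbreviation rename_str :: "(name \<Rightarrow> name) \<Rightarrow> bstr \<Rightarrow> bstr" where
  "rename_str f \<equiv> map (rename_bl f)"

primrec rename_form :: "(name \<Rightarrow> name) \<Rightarrow> form \<Rightarrow> form" where
  "rename_form f Eps = Eps"
| "rename_form f NEps = NEps"
| "rename_form f (And p q) = And (rename_form f p) (rename_form f q)"
| "rename_form f (Or p q) = Or (rename_form f p) (rename_form f q)"
| "rename_form f (Dia l p) = Dia (rename_bl f l) (rename_form f p)"
| "rename_form f (Box l p) = Box (rename_bl f l) (rename_form f p)"
| "rename_form f (Var X) = Var X"
| "rename_form f (Mu X p) = Mu X (rename_form f p)"

lemma perm_bl_eq_rename: "perm_bl a b = rename_bl (swap a b)"
proof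
  show "perm_bl a b l = rename_bl (swap a b) l" for l by (cases l) auto
qed

lemma perm_str_eq_rename: "perm_str a b = rename_str (swap a b)"
  by (rule ext) (simp add: perm_str_def perm_bl_eq_rename)

lemma perm_form_eq_rename: "perm_form a b p = rename_form (swap a b) p"
  by (induction p) (auto simp: perm_bl_eq_rename)

lemma rename_bl_comp [simp]: "rename_bl f (rename_bl g l) = rename_bl (f \<circ> g) l"
  by (cases l) auto

lemma rename_bl_comp_fun [simp]: "rename_bl f \<circ> rename_bl g = rename_bl (f \<circ> g)"
  by (rule ext) simp

lemma rename_form_comp [simp]: "rename_form f (rename_form g p) = rename_form (f \<circ> g) p"
  by (induction p) (auto simp: comp_def)

lemma rename_bl_id [simp]: "rename_bl id l = l" "rename_bl (\<lambda>x. x) l = l"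
  by (cases l; simp)+

lemma rename_bl_id_fun [simp]: "rename_bl id = id"
  by (rule ext) simp

lemma rename_form_id [simp]: "rename_form id p = p" "rename_form (\<lambda>x. x) p = p"
  by (induction p) auto

lemma name_of_rename_bl [simp]: "name_of (rename_bl f l) = f (name_of l)"
  by (cases l) auto

lemma names_str_simps [simp]:
  "names_str [] = {}" "names_str (l # w) = insert (name_of l) (names_str w)"
  "names_str (u @ w) = names_str u \<union> names_str w"
  by (auto simp: names_str_def)

lemma names_rename_str [simp]: "names_str (rename_str f w) = f ` names_str w"
  by (induction w) auto

lemma names_rename_form [simp]: "names_form (rename_form f p) = f ` names_form p"
  by (induction p) auto

lemma finite_names_str [simp]: "finite (names_str w)"
  by (simp add: names_str_def)

lemma finite_names_form [simp]: "finite (names_form p)"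
  by (induction p) auto

lemma FN_subset_names_form: "FN p \<subseteq> names_form p"
  by (induction p) (auto split: bl.splits)

lemma finite_FN [simp]: "finite (FN p)"
  using FN_subset_names_form finite_names_form finite_subset by blast

lemma FN_rename_form: "inj f \<Longrightarrow> FN (rename_form f p) = f ` FN p"
  by (induction p) (auto simp: inj_eq split: bl.splits)

lemma rename_bl_cong: "f (name_of l) = g (name_of l) \<Longrightarrow> rename_bl f l = rename_bl g l"
  by (cases l) auto

lemma rename_str_cong: "(\<And>x. x \<in> names_str w \<Longrightarrow> f x = g x) \<Longrightarrow> rename_str f w = rename_str g w"
  by (induction w) (auto intro: rename_bl_cong)

lemma rename_form_cong: "(\<And>x. x \<in> names_form p \<Longrightarrow> f x = g x) \<Longrightarrow> rename_form f p = rename_form g p"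
  by (induction p) (auto intro: rename_bl_cong)

lemma rename_form_swap_fresh:
  assumes "a \<notin> names_form p" and "b \<notin> names_form p"
  shows "rename_form (swap a b) p = p"
proof -
  have "rename_form (swap a b) p = rename_form id p"
    using assms by (intro rename_form_cong) (auto simp: swap_def)
  then show ?thesis by simp
qed

lemma rename_form_swap_swap:
  assumes "c = b \<or> c \<notin> names_form p" and "d \<notin> names_form p"
  shows "rename_form (swap c d \<circ> swap b c) p = rename_form (swap b d) p"
  using assms by (auto intro!: rename_form_cong simp: swap_def)

lemma size_rename_form [simp]: "size (rename_form f p) = size p"
  by (induction p) auto

lemma fv_rename_form [simp]: "fv (rename_form f p) = fv p"
  by (induction p) auto

lemma unguarded_rename_form [simp]: "unguarded X (rename_form f p) = unguarded X p"
  by (induction p) auto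

lemma guarded_rename_form [simp]: "guarded (rename_form f p) = guarded p"
  by (induction p) auto

section \<open>Abstractions\<close>

locale name_renaming =
  fixes ren :: "(name \<Rightarrow> name) \<Rightarrow> 'x \<Rightarrow> 'x" and supp :: "'x \<Rightarrow> name set"
  assumes ren_comp: "ren f (ren g x) = ren (f \<circ> g) x"
    and ren_id: "ren id x = x"
    and ren_cong: "(\<And>y. y \<in> supp x \<Longrightarrow> f y = g y) \<Longrightarrow> ren f x = ren g x"
    and supp_ren: "supp (ren f x) = f ` supp x"
    and finite_supp: "finite (supp x)"
begin

lemma abstraction_eq_iff:
  "(\<exists>c. c \<notin> {a, b} \<union> supp p \<union> supp q \<and> ren (swap a c) p = ren (swap b c) q) \<longleftrightarrow>
   (b = a \<and> q = p) \<or> (b \<noteq> a \<and> b \<notin> supp p \<and> q = ren (swap a b) p)"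
proof
  assume "\<exists>c. c \<notin> {a, b} \<union> supp p \<union> supp q \<and> ren (swap a c) p = ren (swap b c) q"
  then obtain c where c: "c \<notin> {a, b} \<union> supp p \<union> supp q"
    and eq: "ren (swap a c) p = ren (swap b c) q" by blast
  have q: "q = ren (swap b c \<circ> swap a c) p"
    using arg_cong[OF eq, of "ren (swap b c)"] by (simp add: ren_comp ren_id)
  show "(b = a \<and> q = p) \<or> (b \<noteq> a \<and> b \<notin> supp p \<and> q = ren (swap a b) p)"
  proof (cases "b = a")
    case True
    then show ?thesis using q by (simp add: ren_id)
  next
    case False
    have "b \<notin> supp p"
    proof
      assume "b \<in> supp p"
      then have "swap b c (swap a c b) \<in> supp q" using q by (simp add: supp_ren)
      then show False using c False by simp
    qed
    moreover have "q = ren (swap a b) p"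
      unfolding q using c \<open>b \<notin> supp p\<close> by (intro ren_cong) (auto simp: swap_def)
    ultimately show ?thesis using False by blast
  qed
next
  assume h: "(b = a \<and> q = p) \<or> (b \<noteq> a \<and> b \<notin> supp p \<and> q = ren (swap a b) p)"
  obtain c where c: "c \<notin> {a, b} \<union> supp p \<union> supp q"
    by (erule obtain_fresh_name) (simp add: finite_supp)
  have "ren (swap a c) p = ren (swap b c) q"
    using h c by (auto simp: ren_comp intro!: ren_cong) (auto simp: swap_def)
  then show "\<exists>c. c \<notin> {a, b} \<union> supp p \<union> supp q \<and> ren (swap a c) p = ren (swap b c) q"
    using c by blast
qed

end

interpretation form_renaming: name_renaming rename_form names_form
  by unfold_locales (auto intro: rename_form_cong)

interpretation str_renaming: name_renaming rename_str names_str
proof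
  show "rename_str f w = rename_str g w" if "\<And>y. y \<in> names_str w \<Longrightarrow> f y = g y" for f g w
    using that by (rule rename_str_cong)
qed simp_all

lemma abs_eq_form_iff:
  "abs_eq_form a p b q \<longleftrightarrow>
   (b = a \<and> q = p) \<or> (b \<noteq> a \<and> b \<notin> names_form p \<and> q = rename_form (swap a b) p)"
  unfolding abs_eq_form_def perm_form_eq_rename form_renaming.abstraction_eq_iff ..

lemma abs_eq_str_iff:
  "abs_eq_str a v b u \<longleftrightarrow>
   (b = a \<and> u = v) \<or> (b \<noteq> a \<and> b \<notin> names_str v \<and> u = rename_str (swap a b) v)"
  unfolding abs_eq_str_def perm_str_eq_rename str_renaming.abstraction_eq_iff ..

lemma abs_eq_form_swap: "c \<notin> names_form p \<Longrightarrow> abs_eq_form a p c (rename_form (swap a c) p)"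
  by (cases "c = a") (simp_all add: abs_eq_form_iff)

lemma abs_eq_form_swap_fresh:
  assumes "abs_eq_form a p b q" and "d \<notin> names_form p"
  shows "rename_form (swap b d) q = rename_form (swap a d) p"
  using assms unfolding abs_eq_form_iff
  by (auto intro!: rename_form_cong) (auto simp: swap_def)

section \<open>Free occurrences and alpha-equivalence of bar strings\<close>

lemma free_occ_simps [simp]:
  "\<not> free_occ [] i x"
  "free_occ (Pl b # w) 0 x \<longleftrightarrow> x = b"
  "free_occ (Pl b # w) (Suc i) x \<longleftrightarrow> free_occ w i x"
  "\<not> free_occ (Br b # w) 0 x"
  "free_occ (Br b # w) (Suc i) x \<longleftrightarrow> free_occ w i x \<and> x \<noteq> b"
  by (auto simp: free_occ_def)

lemma free_occ_in_names: "free_occ w i x \<Longrightarrow> x \<in> names_str w"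
  unfolding free_occ_def names_str_def by (metis name_of.simps(1) nth_mem rev_image_eqI)

lemma free_occ_rename: "inj f \<Longrightarrow> free_occ (rename_str f w) i (f x) \<longleftrightarrow> free_occ w i x"
proof (induction w arbitrary: i)
  case (Cons l w)
  then show ?case by (cases l; cases i) (auto simp: inj_eq)
qed simp

lemma free_occ_append:
  "free_occ (u @ w) i x \<longleftrightarrow>
   (i < length u \<and> free_occ u i x) \<or> (length u \<le> i \<and> Br x \<notin> set u \<and> free_occ w (i - length u) x)"
proof (induction u arbitrary: i)
  case (Cons l u)
  then show ?case by (cases l; cases i) auto
qed simp

lemma free_occ_swap_fresh:
  assumes "b \<notin> names_str v"
  shows "free_occ (rename_str (swap a b) v) i x \<and> x \<noteq> b \<longleftrightarrow> free_occ v i x \<and> x \<noteq> a"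
proof (cases "x = a \<or> x = b")
  case True
  then show ?thesis
    using assms free_occ_in_names free_occ_rename[of "swap a b" v i b] by fastforce
next
  case False
  then show ?thesis using free_occ_rename[of "swap a b" v i x] by simp
qed

lemma alpha_length: "alpha w u \<Longrightarrow> length w = length u"
  by (induction rule: alpha.induct) (auto simp: abs_eq_str_iff)

lemma alpha_starts_with_Br:
  "alpha w u \<Longrightarrow> (\<exists>e w'. w = Br e # w') \<longleftrightarrow> (\<exists>e u'. u = Br e # u')"
  by (induction rule: alpha.induct) (auto simp: Cons_eq_append_conv append_eq_Cons_conv)

lemma alpha_rename: "alpha w u \<Longrightarrow> inj f \<Longrightarrow> alpha (rename_str f w) (rename_str f u)"
proof (induction rule: alpha.induct)
  case (alpha_base a v b u w)
  then have "abs_eq_str (f a) (rename_str f v) (f b) (rename_str f u)"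
    by (auto simp: abs_eq_str_iff inj_eq swap_conj)
  then show ?case using alpha.alpha_base by simp
qed (auto intro: alpha.intros)

lemma alpha_Br_swap_fresh: "d \<notin> names_str v \<Longrightarrow> alpha (Br b # v) (Br d # rename_str (swap b d) v)"
  using alpha_base[of b v d "rename_str (swap b d) v" "[]"] alpha_refl
  by (cases "d = b") (auto simp: abs_eq_str_iff)

lemma alpha_free_occ: "alpha w u \<Longrightarrow> free_occ w i x \<longleftrightarrow> free_occ u i x"
proof (induction arbitrary: i rule: alpha.induct)
  case (alpha_base a v b u w)
  have "free_occ u j x \<and> x \<noteq> b \<longleftrightarrow> free_occ v j x \<and> x \<noteq> a" for j
    using alpha_base free_occ_swap_fresh[of b v a j x] by (auto simp: abs_eq_str_iff)
  moreover have "free_occ (Br c # w') k x \<longleftrightarrow> (\<exists>j. k = Suc j \<and> free_occ w' j x \<and> x \<noteq> c)"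
    for c w' k by (cases k) auto
  ultimately show ?case by (auto simp: free_occ_append)
qed auto

section \<open>Alpha-equivalence of formulae\<close>

lemma form_cases [case_names Eps NEps And Or Pl Br Var Mu]:
  obtains "p = Eps" | "p = NEps" | p1 p2 where "p = And p1 p2" | p1 p2 where "p = Or p1 p2"
  | M x q where "M \<in> {Dia, Box}" "p = M (Pl x) q"
  | M b q where "M \<in> {Dia, Box}" "p = M (Br b) q"
  | X where "p = Var X" | X q where "p = Mu X q"
proof (cases p)
  case (Dia l q)
  then show ?thesis by (cases l) (auto intro: that(5)[of Dia] that(6)[of Dia])
next
  case (Box l q)
  then show ?thesis by (cases l) (auto intro: that(5)[of Box] that(6)[of Box])
qed (use that in auto)

lemma modal_form_simps [simp]:
  assumes "M \<in> {Dia, Box}"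
  shows "rename_form f (M l p) = M (rename_bl f l) (rename_form f p)"
    "names_form (M l p) = insert (name_of l) (names_form p)"
    "FN (M (Pl x) p) = insert x (FN p)" "FN (M (Br x) p) = FN p - {x}"
    "fv (M l p) = fv p" "guarded (M l p) = guarded p" "\<not> unguarded X (M l p)"
    "size (M l p) = Suc (size p)" "subst t X (M (Pl x) p) = M (Pl x) (subst t X p)"
    "M l p = M l' p' \<longleftrightarrow> l = l' \<and> p = p'"
  using assms by auto

(* subst picks bound names with fresh, which is not equivariant; renaming commutes with
   substitution only up to this relation (subst_rename). *)
inductive alpha_form :: "form \<Rightarrow> form \<Rightarrow> bool" where
  alpha_form_Eps: "alpha_form Eps Eps"
| alpha_form_NEps: "alpha_form NEps NEps"
| alpha_form_Var: "alpha_form (Var X) (Var X)"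
| alpha_form_And: "alpha_form p p' \<Longrightarrow> alpha_form q q' \<Longrightarrow> alpha_form (And p q) (And p' q')"
| alpha_form_Or: "alpha_form p p' \<Longrightarrow> alpha_form q q' \<Longrightarrow> alpha_form (Or p q) (Or p' q')"
| alpha_form_Mu: "alpha_form p q \<Longrightarrow> alpha_form (Mu X p) (Mu X q)"
| alpha_form_Pl: "M \<in> {Dia, Box} \<Longrightarrow> alpha_form p q \<Longrightarrow> alpha_form (M (Pl x) p) (M (Pl x) q)"
| alpha_form_Br: "M \<in> {Dia, Box} \<Longrightarrow> c \<notin> {a, b} \<union> names_form p \<union> names_form q \<Longrightarrow>
    alpha_form (rename_form (swap a c) p) (rename_form (swap b c) q) \<Longrightarrow>
    alpha_form (M (Br a) p) (M (Br b) q)"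

lemma alpha_form_rename: "alpha_form p q \<Longrightarrow> inj f \<Longrightarrow> alpha_form (rename_form f p) (rename_form f q)"
proof (induction rule: alpha_form.induct)
  case (alpha_form_Br M c a b p q)
  then have "alpha_form (rename_form (swap (f a) (f c)) (rename_form f p))
                        (rename_form (swap (f b) (f c)) (rename_form f q))"
    by (simp add: swap_conj)
  moreover have "f c \<notin> {f a, f b} \<union> names_form (rename_form f p) \<union> names_form (rename_form f q)"
    using alpha_form_Br by (auto simp: inj_eq)
  ultimately show ?case using alpha_form_Br by (auto intro: alpha_form.alpha_form_Br)
qed (auto intro: alpha_form.intros)

lemma alpha_form_refl [simp, intro]: "alpha_form p p"
proof -
  have "alpha_form (rename_form f p) (rename_form f p)" for f
  proof (induction p arbitrary: f rule: form.induct)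
    case (Dia l p)
    then show ?case
    proof (cases l)
      case (Br a)
      obtain c where "c \<notin> {f a} \<union> names_form (rename_form f p)"
        by (erule obtain_fresh_name) simp
      then show ?thesis
        unfolding Br rename_form.simps rename_bl.simps
        by (intro alpha_form_Br[of Dia c]) (use Dia.IH in auto)
    qed (auto intro: alpha_form_Pl[of Dia])
  next
    case (Box l p)
    then show ?case
    proof (cases l)
      case (Br a)
      obtain c where "c \<notin> {f a} \<union> names_form (rename_form f p)"
        by (erule obtain_fresh_name) simp
      then show ?thesis
        unfolding Br rename_form.simps rename_bl.simps
        by (intro alpha_form_Br[of Box c]) (use Box.IH in auto)
    qed (auto intro: alpha_form_Pl[of Box])
  qed (auto intro: alpha_form.intros)
  from this[of id] show ?thesis by simp
qed

lemma alpha_form_sym: "alpha_form p q \<Longrightarrow> alpha_form q p"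
  by (induction rule: alpha_form.induct) (auto intro: alpha_form.intros)

lemma alpha_form_Pl_inv:
  assumes "alpha_form (M (Pl x) p) r" and "M \<in> {Dia, Box}"
  obtains q where "r = M (Pl x) q" and "alpha_form p q"
  using assms by (cases rule: alpha_form.cases) auto

lemma alpha_form_Br_inv:
  assumes "alpha_form (M (Br a) p) r" and "M \<in> {Dia, Box}"
  obtains c b q where "r = M (Br b) q" and "c \<notin> {a, b} \<union> names_form p \<union> names_form q"
    and "alpha_form (rename_form (swap a c) p) (rename_form (swap b c) q)"
  using assms by (cases rule: alpha_form.cases) auto

lemma alpha_form_Br_fresh:
  assumes "alpha_form (M (Br a) p) (M (Br b) q)" and "M \<in> {Dia, Box}"
    and "d \<notin> {a, b} \<union> names_form p \<union> names_form q"
  shows "alpha_form (rename_form (swap a d) p) (rename_form (swap b d) q)"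
proof -
  obtain c where c: "c \<notin> {a, b} \<union> names_form p \<union> names_form q"
    and h: "alpha_form (rename_form (swap a c) p) (rename_form (swap b c) q)"
    using assms(1,2) by (rule alpha_form_Br_inv) (use assms(2) in auto)
  from h have "alpha_form (rename_form (swap c d) (rename_form (swap a c) p))
                        (rename_form (swap c d) (rename_form (swap b c) q))"
    by (rule alpha_form_rename) simp
  moreover have "rename_form (swap c d \<circ> swap a c) p = rename_form (swap a d) p"
    "rename_form (swap c d \<circ> swap b c) q = rename_form (swap b d) q"
    using c assms(3) by (auto intro!: rename_form_cong simp: swap_def)
  ultimately show ?thesis by simp
qed

lemma alpha_form_trans: "alpha_form p q \<Longrightarrow> alpha_form q r \<Longrightarrow> alpha_form p r"
proof (induction "size p" arbitrary: p q r rule: less_induct)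
  case less
  from less.prems(1) show ?case
  proof (cases rule: alpha_form.cases)
    case (alpha_form_And p1 p1' p2 p2')
    from less.prems(2) obtain r1 r2 where "r = And r1 r2" "alpha_form p1' r1" "alpha_form p2' r2"
      unfolding alpha_form_And(2) by (cases rule: alpha_form.cases) auto
    then show ?thesis using less.hyps alpha_form_And by (auto intro!: alpha_form.alpha_form_And)
  next
    case (alpha_form_Or p1 p1' p2 p2')
    from less.prems(2) obtain r1 r2 where "r = Or r1 r2" "alpha_form p1' r1" "alpha_form p2' r2"
      unfolding alpha_form_Or(2) by (cases rule: alpha_form.cases) auto
    then show ?thesis using less.hyps alpha_form_Or by (auto intro!: alpha_form.alpha_form_Or)
  next
    case (alpha_form_Mu p1 q1 X)
    from less.prems(2) obtain r1 where "r = Mu X r1" "alpha_form q1 r1"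
      unfolding alpha_form_Mu(2) by (cases rule: alpha_form.cases) auto
    then show ?thesis using less.hyps alpha_form_Mu by (auto intro!: alpha_form.alpha_form_Mu)
  next
    case (alpha_form_Pl M p1 q1 x)
    have "alpha_form (M (Pl x) q1) r"
      using less.prems(2) alpha_form_Pl(2) by simp
    then obtain r1 where "r = M (Pl x) r1" "alpha_form q1 r1"
      using alpha_form_Pl(3) by (rule alpha_form_Pl_inv)
    moreover have "alpha_form p1 r1"
      using less.hyps alpha_form_Pl \<open>alpha_form q1 r1\<close> by simp
    ultimately show ?thesis
      unfolding alpha_form_Pl(1) by (simp add: alpha_form.alpha_form_Pl[OF alpha_form_Pl(3)])
  next
    case (alpha_form_Br M c a b p0 q0)
    have "alpha_form (M (Br b) q0) r"
      using less.prems(2) alpha_form_Br(2) by simp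
    then obtain e r0 where r: "r = M (Br e) r0"
      using alpha_form_Br(3) by (rule alpha_form_Br_inv) blast
    obtain d where d: "d \<notin> {a, b, e} \<union> names_form p0 \<union> names_form q0 \<union> names_form r0"
      by (erule obtain_fresh_name) simp
    have "alpha_form (rename_form (swap a d) p0) (rename_form (swap b d) q0)"
      using alpha_form_Br_fresh less.prems(1) alpha_form_Br d by auto
    moreover have "alpha_form (rename_form (swap b d) q0) (rename_form (swap e d) r0)"
      using alpha_form_Br_fresh less.prems(2) alpha_form_Br r d by auto
    ultimately have "alpha_form (rename_form (swap a d) p0) (rename_form (swap e d) r0)"
      using less.hyps alpha_form_Br by auto
    from alpha_form.alpha_form_Br[OF alpha_form_Br(3) _ this] show ?thesis
      unfolding alpha_form_Br(1) r using d by blast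
  qed (use less.prems in simp_all)
qed

lemma alpha_form_Br_cong: "M \<in> {Dia, Box} \<Longrightarrow> alpha_form p q \<Longrightarrow> alpha_form (M (Br a) p) (M (Br a) q)"
proof -
  assume "M \<in> {Dia, Box}" and "alpha_form p q"
  moreover obtain c where "c \<notin> {a} \<union> names_form p \<union> names_form q"
    by (erule obtain_fresh_name) simp
  ultimately show ?thesis by (intro alpha_form_Br[of M c]) (auto intro: alpha_form_rename)
qed

lemma alpha_form_Br_rename:
  assumes "M \<in> {Dia, Box}" and "c = b \<or> c \<notin> names_form p"
  shows "alpha_form (M (Br b) p) (M (Br c) (rename_form (swap b c) p))"
proof -
  obtain d where d: "d \<notin> {b, c} \<union> names_form p"
    by (erule obtain_fresh_name) simp
  have "rename_form (swap b d) p = rename_form (swap c d \<circ> swap b c) p"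
    using assms(2) d by (intro rename_form_cong) (auto simp: swap_def)
  then show ?thesis using assms d by (intro alpha_form_Br[of M d]) (auto simp: swap_def)
qed

lemma alpha_form_swap_FN: "x \<notin> FN t \<Longrightarrow> y \<notin> FN t \<Longrightarrow> alpha_form (rename_form (swap x y) t) t"
proof (induction "size t" arbitrary: t rule: less_induct)
  case less
  show ?case
  proof (cases t rule: form_cases)
    case (Br M e t0)
    let ?s = "swap x y"
    obtain d where d: "d \<notin> {x, y, e} \<union> names_form t0"
      by (erule obtain_fresh_name) simp
    have "x \<notin> FN (rename_form (swap e d) t0)" "y \<notin> FN (rename_form (swap e d) t0)"
      using less.prems Br d FN_subset_names_form[of t0] by (auto simp: FN_rename_form swap_def)
    then have "alpha_form (rename_form (?s \<circ> swap e d) t0) (rename_form (swap e d) t0)"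
      using less.hyps[of "rename_form (swap e d) t0"] Br by simp
    moreover have "?s \<circ> swap e d = swap (?s e) d \<circ> ?s"
      using swap_conj[of ?s e d] d by simp
    moreover have "d \<notin> {?s e, e} \<union> names_form (rename_form ?s t0) \<union> names_form t0"
      using d by (auto simp: swap_def)
    ultimately show ?thesis
      unfolding Br(2) using Br(1) by (simp only: modal_form_simps rename_bl.simps)
        (rule alpha_form_Br[of M d], simp_all)
  next
    case (Pl M z q)
    have "alpha_form (M (Pl z) (rename_form (swap x y) q)) (M (Pl z) q)"
      by (rule alpha_form_Pl[of M]) (use less Pl in auto)
    then show ?thesis using less.prems Pl by simp
  qed (use less in \<open>auto intro: alpha_form_And alpha_form_Or alpha_form_Mu\<close>)
qed

section \<open>Substitution\<close>

lemma subst_Br: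
  "M \<in> {Dia, Box} \<Longrightarrow> subst t X (M (Br b) p) =
     (if b \<in> FN t then
        let c = fresh (insert b (names_form p \<union> names_form t))
        in M (Br c) (subst t X (rename_form (swap b c) p))
      else M (Br b) (subst t X p))"
  by (auto simp: perm_form_eq_rename)

lemma fresh_subst_notin:
  "fresh (insert b (names_form p \<union> names_form t)) \<notin> insert b (names_form p \<union> names_form t)"
  by (rule fresh_notin) simp

lemma subst_Br_shape:
  assumes "M \<in> {Dia, Box}"
  obtains c where "subst t X (M (Br b) p) = M (Br c) (subst t X (rename_form (swap b c) p))"
    and "c \<notin> FN t" and "c = b \<or> c \<notin> names_form p \<union> names_form t"
proof (cases "b \<in> FN t")
  case True
  let ?c = "fresh (insert b (names_form p \<union> names_form t))"
  have "?c \<notin> FN t" using fresh_subst_notin FN_subset_names_form by blast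
  then show ?thesis using that[of ?c] True assms fresh_subst_notin[of b p t]
    by (simp add: subst_Br Let_def)
next
  case False
  then show ?thesis using that[of b] assms by (simp add: subst_Br)
qed

lemma FN_rename_swap_fresh: "c \<notin> names_form p \<Longrightarrow> FN (rename_form (swap b c) p) - {c} = FN p - {b}"
  using FN_subset_names_form[of p] by (auto simp: FN_rename_form swap_def)

lemma FN_subst: "FN (subst t X p) \<subseteq> FN p \<union> FN t"
proof (induction "size p" arbitrary: p rule: less_induct)
  case less
  show ?case
  proof (cases p rule: form_cases)
    case (Br M b q)
    obtain c where c: "subst t X p = M (Br c) (subst t X (rename_form (swap b c) q))"
      "c = b \<or> c \<notin> names_form q \<union> names_form t"
      using subst_Br_shape[OF Br(1)] Br(2) by metis
    have "FN (subst t X (rename_form (swap b c) q)) \<subseteq> FN (rename_form (swap b c) q) \<union> FN t"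
      using less Br by simp
    moreover have "FN (rename_form (swap b c) q) - {c} = FN q - {b}"
      using c(2) FN_rename_swap_fresh[of c q b] by auto
    ultimately show ?thesis using c(1) Br by auto
  next
    case (And p1 p2)
    then show ?thesis using less[of p1] less[of p2] by auto
  next
    case (Or p1 p2)
    then show ?thesis using less[of p1] less[of p2] by auto
  next
    case (Pl M x q)
    then show ?thesis using less[of q] by auto
  next
    case (Mu Y q)
    then show ?thesis using less[of q] by auto
  qed auto
qed

lemma fv_subst: "fv t = {} \<Longrightarrow> fv (subst t X p) \<subseteq> fv p - {X}"
  by (induction t X p rule: subst.induct) (auto simp: Let_def perm_form_eq_rename)

lemma unguarded_in_fv: "unguarded Y t \<Longrightarrow> Y \<in> fv t"
  by (induction t) auto

lemma unguarded_subst: "unguarded Y (subst t X p) \<Longrightarrow> unguarded Y p \<or> Y \<in> fv t"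
  by (induction t X p rule: subst.induct) (auto simp: Let_def unguarded_in_fv split: if_splits)

lemma guarded_subst: "guarded p \<Longrightarrow> guarded t \<Longrightarrow> fv t = {} \<Longrightarrow> guarded (subst t X p)"
  by (induction t X p rule: subst.induct)
    (auto simp: Let_def perm_form_eq_rename dest: unguarded_subst)

lemma subst_rename:
  "inj f \<Longrightarrow> alpha_form (rename_form f (subst t X p)) (subst (rename_form f t) X (rename_form f p))"
proof (induction "size p" arbitrary: p f t rule: less_induct)
  case less
  show ?case
  proof (cases p rule: form_cases)
    case (Br M b q)
    show ?thesis
    proof (cases "b \<in> FN t")
      case False
      then have "f b \<notin> FN (rename_form f t)" using less.prems by (auto simp: FN_rename_form inj_eq)
      moreover have
        "alpha_form (rename_form f (subst t X q)) (subst (rename_form f t) X (rename_form f q))"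
        using less Br by simp
      ultimately show ?thesis using Br False by (simp add: subst_Br alpha_form_Br_cong)
    next
      case True
      let ?ft = "rename_form f t"
      define c where "c = fresh (insert b (names_form q \<union> names_form t))"
      define c' where "c' = fresh (insert (f b) (names_form (rename_form f q) \<union> names_form ?ft))"
      define q1 where "q1 = rename_form (swap b c) q"
      define q2 where "q2 = rename_form (swap (f b) c') (rename_form f q)"
      have c: "c \<notin> insert b (names_form q \<union> names_form t)"
        and c': "c' \<notin> insert (f b) (names_form (rename_form f q) \<union> names_form ?ft)"
        unfolding c_def c'_def by (rule fresh_subst_notin)+
      have lhs: "rename_form f (subst t X p) = M (Br (f c)) (rename_form f (subst t X q1))"
        using True Br by (simp add: subst_Br Let_def c_def q1_def)
      have rhs: "subst ?ft X (rename_form f p) = M (Br c') (subst ?ft X q2)"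
        using True Br less.prems
        by (simp add: subst_Br Let_def c'_def q2_def FN_rename_form del: rename_form_comp)
      obtain d where d: "d \<notin> {f c, c', f b} \<union> f ` names_form q \<union> f ` names_form t
          \<union> names_form (rename_form f (subst t X q1)) \<union> names_form (subst ?ft X q2)"
        by (erule obtain_fresh_name) simp
      let ?g = "swap (f c) d \<circ> f"
      have eq_t: "rename_form ?g t = ?ft"
        using c d less.prems by (intro rename_form_cong) (auto simp: swap_def inj_eq)
      have eq_q: "rename_form ?g q1 = rename_form (swap c' d) q2"
        unfolding q1_def q2_def using c c' d less.prems
        by (simp, intro rename_form_cong) (auto simp: swap_def inj_eq)
      have IH1: "alpha_form (rename_form ?g (subst t X q1)) (subst ?ft X (rename_form ?g q1))"
        using less.hyps[of q1 ?g t] Br less.prems eq_t by (simp add: q1_def inj_compose)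
      have IH2: "alpha_form (rename_form (swap c' d) (subst ?ft X q2))
                            (subst ?ft X (rename_form (swap c' d) q2))"
        using less.hyps[of q2 "swap c' d" ?ft] Br c' d
        by (simp add: q2_def rename_form_swap_fresh del: rename_form_comp)
      from IH1[unfolded eq_q] IH2
      have "alpha_form (rename_form ?g (subst t X q1)) (rename_form (swap c' d) (subst ?ft X q2))"
        by (rule alpha_form_trans[OF _ alpha_form_sym])
      then have "alpha_form (rename_form (swap (f c) d) (rename_form f (subst t X q1)))
                            (rename_form (swap c' d) (subst ?ft X q2))"
        by simp
      then show ?thesis
        unfolding lhs rhs by (rule alpha_form_Br[OF Br(1), rotated]) (use d in auto)
    qed
  next
    case (Pl M x q)
    then show ?thesis using less by (simp add: alpha_form_Pl)
  qed (use less in \<open>auto intro: alpha_form_And alpha_form_Or alpha_form_Mu\<close>)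
qed

lemma subst_alpha: "alpha_form p p' \<Longrightarrow> alpha_form t t' \<Longrightarrow> alpha_form (subst t X p) (subst t' X p')"
proof (induction "size p" arbitrary: p p' t t' rule: less_induct)
  case less
  from less.prems(1) show ?case
  proof (cases rule: alpha_form.cases)
    case (alpha_form_Br M c a b q q')
    obtain a1 where A: "subst t X p = M (Br a1) (subst t X (rename_form (swap a a1) q))"
      "a1 \<notin> FN t" "a1 = a \<or> a1 \<notin> names_form q \<union> names_form t"
      using subst_Br_shape[OF alpha_form_Br(3)] alpha_form_Br(1) by metis
    obtain b1 where B: "subst t' X p' = M (Br b1) (subst t' X (rename_form (swap b b1) q'))"
      "b1 \<notin> FN t'" "b1 = b \<or> b1 \<notin> names_form q' \<union> names_form t'"
      using subst_Br_shape[OF alpha_form_Br(3)] alpha_form_Br(2) by metis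
    let ?s1 = "subst t X (rename_form (swap a a1) q)"
    let ?s2 = "subst t' X (rename_form (swap b b1) q')"
    obtain d where d: "d \<notin> {a, b, a1, b1} \<union> names_form q \<union> names_form q' \<union> names_form t
        \<union> names_form t' \<union> names_form ?s1 \<union> names_form ?s2"
      by (erule obtain_fresh_name) simp
    have "rename_form (swap a1 d \<circ> swap a a1) q = rename_form (swap a d) q"
      "rename_form (swap b1 d \<circ> swap b b1) q' = rename_form (swap b d) q'"
      using A(3) B(3) d by (auto intro!: rename_form_swap_swap)
    then have S1: "alpha_form (rename_form (swap a1 d) ?s1)
                               (subst (rename_form (swap a1 d) t) X (rename_form (swap a d) q))"
      and S2: "alpha_form (rename_form (swap b1 d) ?s2)
                          (subst (rename_form (swap b1 d) t') X (rename_form (swap b d) q'))"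
      using subst_rename[OF inj_swap, of a1 d t X "rename_form (swap a a1) q"]
        subst_rename[OF inj_swap, of b1 d t' X "rename_form (swap b b1) q'"] by simp_all
    have "alpha_form (rename_form (swap a1 d) t) t" "alpha_form t' (rename_form (swap b1 d) t')"
      using A(2) B(2) d FN_subset_names_form[of t] FN_subset_names_form[of t']
      by (auto intro: alpha_form_swap_FN alpha_form_sym)
    then have "alpha_form (rename_form (swap a1 d) t) (rename_form (swap b1 d) t')"
      using less.prems(2) by (blast intro: alpha_form_trans)
    moreover have "alpha_form (rename_form (swap a d) q) (rename_form (swap b d) q')"
      using alpha_form_Br_fresh less.prems(1) alpha_form_Br d by auto
    ultimately have "alpha_form (subst (rename_form (swap a1 d) t) X (rename_form (swap a d) q))
                                (subst (rename_form (swap b1 d) t') X (rename_form (swap b d) q'))"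
      using less.hyps alpha_form_Br by simp
    with S1 S2 have "alpha_form (rename_form (swap a1 d) ?s1) (rename_form (swap b1 d) ?s2)"
      by (blast intro: alpha_form_trans alpha_form_sym)
    then show ?thesis
      unfolding A(1) B(1)
        by (rule alpha_form.alpha_form_Br[OF alpha_form_Br(3), rotated]) (use d in auto)
  next
    case (alpha_form_Pl M q q' x)
    then show ?thesis using less by (simp add: alpha_form.alpha_form_Pl)
  qed (use less in \<open>auto intro!: alpha_form_And alpha_form_Or alpha_form_Mu\<close>)
qed

section \<open>Equivariance of satisfaction\<close>

inductive_simps sat_simps [simp]:
  "sat S w Eps" "sat S w NEps" "sat S w (And p q)" "sat S w (Or p q)"
  "sat S w (Dia (Pl a) p)" "sat S w (Box (Pl a) p)"

inductive_simps sat_Mu_iff: "sat S w (Mu X p)"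

lemma sat_equivariant_Dia_Br:
  assumes w: "alpha w (Br b # v)" and ab: "abs_eq_form a p b q'"
    and IH: "\<And>S' g r. bij g \<Longrightarrow> alpha_form (rename_form g q') r \<Longrightarrow> sat S' (rename_str g v) r"
    and f: "bij f" and q: "alpha_form (rename_form f (Dia (Br a) p)) q"
  shows "sat S' (rename_str f w) q"
proof -
  have inj: "inj f" using f by (rule bij_is_inj)
  from q obtain a2 p2 where q_eq: "q = Dia (Br a2) p2"
    by (auto elim: alpha_form_Br_inv[of Dia])
  obtain d where d: "d \<notin> {a2, f a, f b} \<union> names_form p2 \<union> names_form (rename_form f p)
      \<union> names_str (rename_str f v)"
    by (erule obtain_fresh_name) simp
  have "alpha (rename_str f w) (Br (f b) # rename_str f v)"
    using alpha_rename[OF w inj] by simp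
  then have al: "alpha (rename_str f w) (Br d # rename_str (swap (f b) d) (rename_str f v))"
    using alpha_Br_swap_fresh d by (blast intro: alpha_trans)
  have "alpha_form (rename_form (swap (f a) d) (rename_form f p)) (rename_form (swap a2 d) p2)"
    using alpha_form_Br_fresh[of Dia "f a" "rename_form f p" a2 p2 d] q q_eq d by auto
  moreover have
    "rename_form (swap (f b) d) (rename_form f q') = rename_form (swap (f a) d) (rename_form f p)"
    using ab d inj by (intro abs_eq_form_swap_fresh) (auto simp: abs_eq_form_iff inj_eq swap_conj)
  ultimately have "alpha_form (rename_form (swap (f b) d \<circ> f) q') (rename_form (swap a2 d) p2)"
    by simp
  then have "sat (insert d S') (rename_str (swap (f b) d \<circ> f) v) (rename_form (swap a2 d) p2)"
    by (rule IH[rotated]) (simp add: bij_comp f)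
  moreover have "abs_eq_form a2 p2 d (rename_form (swap a2 d) p2)"
    using d by (simp add: abs_eq_form_swap)
  ultimately show ?thesis using al q_eq by (auto intro: sat.sat_DiaBr)
qed

lemma sat_equivariant_Box_Br:
  assumes IH: "\<And>q' v b S' g r. alpha w (Br b # v) \<Longrightarrow> abs_eq_form a p b q' \<Longrightarrow>
                 bij g \<Longrightarrow> alpha_form (rename_form g q') r \<Longrightarrow> sat S' (rename_str g v) r"
    and f: "bij f" and q: "alpha_form (rename_form f (Box (Br a) p)) q"
  shows "sat S' (rename_str f w) q"
proof -
  have inj: "inj f" and surj: "surj f" using f bij_is_inj bij_is_surj by auto
  from q obtain a2 p2 where q_eq: "q = Box (Br a2) p2"
    by (auto elim: alpha_form_Br_inv[of Box])
  have "sat (insert b2 S') v2 q2"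
    if al2: "alpha (rename_str f w) (Br b2 # v2)" and ab2: "abs_eq_form a2 p2 b2 q2"
    for q2 v2 b2
  proof -
    obtain d where
      d: "d \<notin> {b2, a2, f a} \<union> names_form p2 \<union> names_form (rename_form f p) \<union> names_str v2"
      by (erule obtain_fresh_name) simp
    define e where "e = inv f d"
    have fe: "f e = d" unfolding e_def using surj by (simp add: surj_f_inv_f)
    have "alpha (rename_str f w) (Br d # rename_str (swap b2 d) v2)"
      using al2 alpha_Br_swap_fresh d by (blast intro: alpha_trans)
    then have
      "alpha (rename_str (inv f) (rename_str f w)) (Br e # rename_str (inv f \<circ> swap b2 d) v2)"
      using alpha_rename[OF _ bij_is_inj[OF bij_imp_bij_inv[OF f]]] e_def by fastforce
    then have al: "alpha w (Br e # rename_str (inv f \<circ> swap b2 d) v2)"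
      using inj by simp
    have "e \<notin> names_form p" using d fe by auto
    then have ab: "abs_eq_form a p e (rename_form (swap a e) p)"
      by (rule abs_eq_form_swap)
    have "rename_form (swap b2 d \<circ> f) (rename_form (swap a e) p) =
          rename_form (swap b2 d) (rename_form (swap (f a) d) (rename_form f p))"
      using swap_conj[OF inj, of a e] fe by (simp add: comp_assoc)
    moreover have
      "alpha_form (rename_form (swap (f a) d) (rename_form f p)) (rename_form (swap a2 d) p2)"
      using alpha_form_Br_fresh[of Box "f a" "rename_form f p" a2 p2 d] q q_eq d by auto
    moreover have "rename_form (swap b2 d) (rename_form (swap a2 d) p2) = q2"
      using arg_cong[OF abs_eq_form_swap_fresh[OF ab2, of d], of "rename_form (swap b2 d)"] d
        by simp
    ultimately have "alpha_form (rename_form (swap b2 d \<circ> f) (rename_form (swap a e) p)) q2"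
      by (metis alpha_form_rename inj_swap)
    then have
      "sat (insert b2 S') (rename_str (swap b2 d \<circ> f) (rename_str (inv f \<circ> swap b2 d) v2)) q2"
      using IH[OF al ab] f by (simp add: bij_comp)
    moreover have "rename_str (swap b2 d \<circ> f) (rename_str (inv f \<circ> swap b2 d) v2) = v2"
      using surj by (simp add: comp_def surj_f_inv_f)
    ultimately show ?thesis by simp
  qed
  then show ?thesis using q_eq by (auto intro: sat.sat_BoxBr)
qed

lemma sat_equivariant:
  "sat S w p \<Longrightarrow> bij f \<Longrightarrow> alpha_form (rename_form f p) q \<Longrightarrow> sat S' (rename_str f w) q"
proof (induction arbitrary: S' f q rule: sat.induct)
  case (sat_Eps S)
  from sat_Eps.prems(2) show ?case by (cases rule: alpha_form.cases) auto
next
  case (sat_NEps w S)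
  from sat_NEps.prems(2) show ?case using sat_NEps.hyps by (cases rule: alpha_form.cases) auto
next
  case (sat_And S w p q)
  from sat_And.prems(2) show ?case
    by (cases rule: alpha_form.cases) (auto intro: sat_And.IH[OF sat_And.prems(1)])
next
  case (sat_Or1 S w p q)
  from sat_Or1.prems(2) show ?case
    by (cases rule: alpha_form.cases) (auto intro: sat_Or1.IH[OF sat_Or1.prems(1)])
next
  case (sat_Or2 S w q p)
  from sat_Or2.prems(2) show ?case
    by (cases rule: alpha_form.cases) (auto intro: sat_Or2.IH[OF sat_Or2.prems(1)])
next
  case (sat_Mu S w X p)
  from sat_Mu.prems(2) obtain q0 where q: "q = Mu X q0" and q0: "alpha_form (rename_form f p) q0"
    by (cases rule: alpha_form.cases) auto
  have "alpha_form (rename_form f (subst (Mu X p) X p))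
                   (subst (Mu X (rename_form f p)) X (rename_form f p))"
    using subst_rename[OF bij_is_inj[OF sat_Mu.prems(1)], of "Mu X p" X p] by simp
  moreover have
    "alpha_form (subst (Mu X (rename_form f p)) X (rename_form f p)) (subst (Mu X q0) X q0)"
    using subst_alpha[OF q0 alpha_form_Mu[OF q0]] .
  ultimately have "sat S' (rename_str f w) (subst (Mu X q0) X q0)"
    using sat_Mu.IH[OF sat_Mu.prems(1)] alpha_form_trans by blast
  then show ?case unfolding q by (rule sat.sat_Mu)
next
  case (sat_DiaPl S v p a)
  from sat_DiaPl.prems(2) obtain q0 where "q = Dia (Pl (f a)) q0" "alpha_form (rename_form f p) q0"
    by (auto elim: alpha_form_Pl_inv[of Dia])
  then show ?case using sat_DiaPl.IH[OF sat_DiaPl.prems(1)] by simp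
next
  case (sat_BoxPl w a S p)
  from sat_BoxPl.prems(2) obtain q0
    where q: "q = Box (Pl (f a)) q0" "alpha_form (rename_form f p) q0"
    by (auto elim: alpha_form_Pl_inv[of Box])
  have inj: "inj f" using sat_BoxPl.prems(1) by (rule bij_is_inj)
  have "sat S' v q0" if "rename_str f w = Pl (f a) # v" for v
  proof -
    from that inj obtain w0 where "w = Pl a # w0" "v = rename_str f w0"
      by (cases w; cases "hd w") (auto simp: inj_eq)
    then show ?thesis using sat_BoxPl.IH sat_BoxPl.prems(1) q(2) by blast
  qed
  then show ?case using q(1) by simp
next
  case (sat_DiaBr w b v a p q' S)
  show ?case by (rule sat_equivariant_Dia_Br[OF sat_DiaBr.hyps(1,2) sat_DiaBr.IH sat_DiaBr.prems])
next
  case (sat_BoxBr w a p S)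
  show ?case by (rule sat_equivariant_Box_Br[OF _ sat_BoxBr.prems]) (use sat_BoxBr.IH in blast)
qed

lemma sat_rename: "sat S w p \<Longrightarrow> bij f \<Longrightarrow> sat S' (rename_str f w) (rename_form f p)"
  using sat_equivariant by blast

lemma sat_alpha_form: "sat S w p \<Longrightarrow> alpha_form p q \<Longrightarrow> sat S' w q"
  using sat_equivariant[of S w p id q S'] by simp

lemma sat_Top [simp]: "sat S w Top" and sat_Bot [simp]: "\<not> sat S w Bot"
  by (simp_all add: Top_def Bot_def)

lemma sat_Disj: "sat S w (Disj ps) \<longleftrightarrow> (\<exists>p \<in> set ps. sat S w p)"
  by (induction ps) (auto simp: Disj_def)

lemma sat_DiaSet: "finite D \<Longrightarrow> sat S w (DiaSet D) \<longleftrightarrow> (\<exists>d \<in> D. \<exists>w'. w = Pl d # w')"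
  by (auto simp: DiaSet_def sat_Disj)

lemma sat_DiaBarTop: "sat S w DiaBarTop \<longleftrightarrow> (\<exists>e w'. w = Br e # w')"
proof
  assume "sat S w DiaBarTop"
  then obtain b v where "alpha w (Br b # v)"
    unfolding DiaBarTop_def by (cases rule: sat.cases) auto
  then show "\<exists>e w'. w = Br e # w'" using alpha_starts_with_Br by blast
next
  assume "\<exists>e w'. w = Br e # w'"
  then obtain e w' where w: "w = Br e # w'" by blast
  have "abs_eq_form 0 Top e Top" using abs_eq_form_swap[of e Top 0] by (simp add: Top_def)
  then show "sat S w DiaBarTop"
    unfolding DiaBarTop_def w by (intro sat_DiaBr[OF alpha_refl]) auto
qed

lemma sat_Dia_Br_fresh_iff:
  assumes "finite F" and "names_form p \<subseteq> F"
  shows "sat S w (Dia (Br c) p) \<longleftrightarrow>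
    (\<exists>d v. d \<notin> F \<and> alpha w (Br d # v) \<and> sat S (rename_str (swap c d) v) p)"
proof
  assume "sat S w (Dia (Br c) p)"
  then obtain b v q where al: "alpha w (Br b # v)" and ab: "abs_eq_form c p b q"
    and sat_q: "sat (insert b S) v q"
    by (cases rule: sat.cases) auto
  obtain d where d: "d \<notin> F \<union> {c, b} \<union> names_str v"
    by (erule obtain_fresh_name) (simp add: assms(1))
  have "alpha w (Br d # rename_str (swap b d) v)"
    using al alpha_Br_swap_fresh d by (blast intro: alpha_trans)
  moreover have "rename_form (swap c d) (rename_form (swap b d) q) = p"
    using arg_cong[OF abs_eq_form_swap_fresh[OF ab, of d], of "rename_form (swap c d)"] d assms(2)
    by auto
  then have "sat S (rename_str (swap c d) (rename_str (swap b d) v)) p"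
    using sat_rename[OF sat_q, of "swap c d \<circ> swap b d"] by (simp add: bij_comp)
  ultimately show "\<exists>d v. d \<notin> F \<and> alpha w (Br d # v) \<and> sat S (rename_str (swap c d) v) p"
    using d by blast
next
  assume "\<exists>d v. d \<notin> F \<and> alpha w (Br d # v) \<and> sat S (rename_str (swap c d) v) p"
  then obtain d v where d: "d \<notin> F" and al: "alpha w (Br d # v)"
    and sat_p: "sat S (rename_str (swap c d) v) p" by blast
  have "abs_eq_form c p d (rename_form (swap c d) p)"
    using d assms(2) by (intro abs_eq_form_swap) auto
  moreover have "sat (insert d S) v (rename_form (swap c d) p)"
    using sat_rename[OF sat_p bij_swap[of c d]] by simp
  ultimately show "sat S w (Dia (Br c) p)" by (rule sat_DiaBr[OF al])
qed

lemma sat_Box_Br_fresh_iff: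
  assumes "finite F" and "names_form p \<subseteq> F"
  shows "sat S w (Box (Br c) p) \<longleftrightarrow>
    (\<forall>d v. d \<notin> F \<longrightarrow> alpha w (Br d # v) \<longrightarrow> sat S (rename_str (swap c d) v) p)"
proof
  assume "sat S w (Box (Br c) p)"
  then have all: "\<forall>q v b. alpha w (Br b # v) \<and> abs_eq_form c p b q \<longrightarrow> sat (insert b S) v q"
    by (cases rule: sat.cases) auto
  show "\<forall>d v. d \<notin> F \<longrightarrow> alpha w (Br d # v) \<longrightarrow> sat S (rename_str (swap c d) v) p"
  proof (intro allI impI)
    fix d v assume d: "d \<notin> F" and al: "alpha w (Br d # v)"
    have "abs_eq_form c p d (rename_form (swap c d) p)"
      using d assms(2) by (intro abs_eq_form_swap) auto
    then have "sat (insert d S) v (rename_form (swap c d) p)" using all al by blast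
    from sat_rename[OF this bij_swap[of c d]] show "sat S (rename_str (swap c d) v) p" by simp
  qed
next
  assume all: "\<forall>d v. d \<notin> F \<longrightarrow> alpha w (Br d # v) \<longrightarrow> sat S (rename_str (swap c d) v) p"
  have "sat (insert b S) v q" if al: "alpha w (Br b # v)" and ab: "abs_eq_form c p b q" for q v b
  proof -
    obtain d where d: "d \<notin> F \<union> {c, b} \<union> names_str v"
      by (erule obtain_fresh_name) (simp add: assms(1))
    have "alpha w (Br d # rename_str (swap b d) v)"
      using al alpha_Br_swap_fresh d by (blast intro: alpha_trans)
    then have "sat S (rename_str (swap c d) (rename_str (swap b d) v)) p"
      using all d by blast
    then have "sat (insert b S)
        (rename_str (swap b d \<circ> swap c d) (rename_str (swap c d) (rename_str (swap b d) v)))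
        (rename_form (swap b d \<circ> swap c d) p)"
      by (rule sat_rename) (simp add: bij_comp)
    moreover have
      "rename_form (swap b d) (rename_form (swap b d) q) = rename_form (swap b d \<circ> swap c d) p"
      using arg_cong[OF abs_eq_form_swap_fresh[OF ab, of d], of "rename_form (swap b d)"] d assms(2)
      by auto
    ultimately show ?thesis by (simp add: comp_assoc)
  qed
  then show "sat S w (Box (Br c) p)" by (auto intro: sat_BoxBr)
qed

lemma sat_Br_cong:
  assumes "M \<in> {Dia, Box}" and "finite F" and "names_form p \<union> names_form q \<subseteq> F"
    and "\<And>d v. d \<notin> F \<Longrightarrow> alpha w (Br d # v) \<Longrightarrow>
           sat S (rename_str (swap c d) v) p \<longleftrightarrow> sat S (rename_str (swap c d) v) q"
  shows "sat S w (M (Br c) p) \<longleftrightarrow> sat S w (M (Br c) q)"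
proof -
  have names: "names_form p \<subseteq> F" "names_form q \<subseteq> F" using assms(3) by auto
  from assms(1) consider "M = Dia" | "M = Box" by blast
  then show ?thesis
  proof cases
    case 1
    show ?thesis
      unfolding 1 sat_Dia_Br_fresh_iff[OF assms(2) names(1)] sat_Dia_Br_fresh_iff[OF assms(2) names(2)]
      using assms(4) by blast
  next
    case 2
    show ?thesis
      unfolding 2 sat_Box_Br_fresh_iff[OF assms(2) names(1)] sat_Box_Br_fresh_iff[OF assms(2) names(2)]
      using assms(4) by blast
  qed
qed

section \<open>Restriction\<close>

text \<open>Conditions (i) and (ii) of the theorem; in (ii) the set \<open>F\<close> stands for \<open>FN \<phi>\<close>.\<close>

definition free_before_in :: "name set \<Rightarrow> name option \<Rightarrow> bstr \<Rightarrow> bool" where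
  "free_before_in B a v \<longleftrightarrow>
     (\<forall>x. a = Some x \<longrightarrow> (\<forall>i d. free_occ v i d \<and> (\<forall>j\<le>i. \<not> free_occ v j x) \<longrightarrow> d \<in> B))"

definition first_free_outside_in :: "name set \<Rightarrow> name set \<Rightarrow> name set \<Rightarrow> bstr \<Rightarrow> bool" where
  "first_free_outside_in B C F v \<longleftrightarrow>
     (\<forall>i d. free_occ v i d \<and> d \<notin> B \<and> (\<forall>j<i. \<forall>e. free_occ v j e \<longrightarrow> e \<in> B) \<and> d \<in> F \<longrightarrow> d \<in> C)"

lemma free_before_in_None [simp]: "free_before_in B None v"
  by (simp add: free_before_in_def)

lemma first_free_outside_in_empty [simp]: "first_free_outside_in {} F F v"
  by (simp add: first_free_outside_in_def)

lemma first_free_outside_in_mono: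
  "F' \<subseteq> F \<Longrightarrow> first_free_outside_in B C F v \<Longrightarrow> first_free_outside_in B C F' v"
  unfolding first_free_outside_in_def by blast

lemma free_before_in_head: "free_before_in B (Some x) (Pl d # v) \<Longrightarrow> d = x \<or> d \<in> B"
  unfolding free_before_in_def by (metis free_occ_simps(2) le_zero_eq)

lemma first_free_outside_in_head:
  "first_free_outside_in B C F (Pl d # v) \<Longrightarrow> d \<notin> B \<Longrightarrow> d \<in> F \<Longrightarrow> d \<in> C"
  unfolding first_free_outside_in_def by (metis free_occ_simps(2) not_less_zero)

lemma free_before_in_Pl_tail:
  assumes "b \<in> B" and "set_option a \<inter> B = {}" and "free_before_in B a (Pl b # v)"
  shows "free_before_in B a v"
  unfolding free_before_in_def
proof (intro allI impI, elim conjE)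
  fix x i d assume x: "a = Some x" and d: "free_occ v i d" and before: "\<forall>j\<le>i. \<not> free_occ v j x"
  have "\<forall>j \<le> Suc i. \<not> free_occ (Pl b # v) j x"
  proof (intro allI impI)
    fix j assume "j \<le> Suc i"
    then show "\<not> free_occ (Pl b # v) j x" using before x assms(1,2) by (cases j) auto
  qed
  moreover have "free_occ (Pl b # v) (Suc i) d" using d by simp
  ultimately show "d \<in> B" using assms(3) x unfolding free_before_in_def by blast
qed

lemma first_free_outside_in_Pl_tail:
  assumes "b \<in> B" and "first_free_outside_in B C F (Pl b # v)"
  shows "first_free_outside_in B C F v"
  unfolding first_free_outside_in_def
proof (intro allI impI, elim conjE)
  fix i d assume d: "free_occ v i d" "d \<notin> B" "d \<in> F"
    and before: "\<forall>j<i. \<forall>e. free_occ v j e \<longrightarrow> e \<in> B"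
  have "\<forall>j < Suc i. \<forall>e. free_occ (Pl b # v) j e \<longrightarrow> e \<in> B"
  proof (intro allI impI)
    fix j e assume "j < Suc i" "free_occ (Pl b # v) j e"
    then show "e \<in> B" using before assms(1) by (cases j) auto
  qed
  then show "d \<in> C" using assms(2) d unfolding first_free_outside_in_def
    by (metis free_occ_simps(3))
qed

lemma free_occ_Br_tail:
  assumes "alpha v (Br d # v')" and "d \<notin> names_str v" and "y \<noteq> c"
  shows "free_occ (rename_str (swap c d) v') i y \<longleftrightarrow> free_occ v (Suc i) (swap c d y)"
proof -
  have "free_occ (rename_str (swap c d) v') i y \<longleftrightarrow> free_occ v' i (swap c d y)"
    using free_occ_rename[of "swap c d" v' i "swap c d y"] by simp
  moreover have "free_occ v (Suc i) z \<longleftrightarrow> free_occ v' i z \<and> z \<noteq> d" for z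
    using alpha_free_occ[OF assms(1)] by simp
  ultimately show ?thesis using assms(3) by simp
qed

lemma free_before_in_Br_tail:
  assumes al: "alpha v (Br d # v')" and d: "d \<notin> names_str v" "d \<notin> B" and c: "c \<notin> B"
    and a: "set_option a \<inter> {c, d} = {}" and before: "free_before_in B a v"
  shows "free_before_in (insert c B) a (rename_str (swap c d) v')"
  unfolding free_before_in_def
proof (intro allI impI, elim conjE)
  fix x i y assume x: "a = Some x" and y: "free_occ (rename_str (swap c d) v') i y"
    and no_x: "\<forall>j\<le>i. \<not> free_occ (rename_str (swap c d) v') j x"
  show "y \<in> insert c B"
  proof (cases "y = c")
    case False
    have xcd: "x \<noteq> c" "x \<noteq> d" using a x by auto
    obtain e v0 where v: "v = Br e # v0" using al alpha_starts_with_Br by blast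
    have "\<forall>j \<le> Suc i. \<not> free_occ v j x"
    proof (intro allI impI)
      fix j assume "j \<le> Suc i"
      then show "\<not> free_occ v j x"
        using no_x free_occ_Br_tail[OF al d(1) xcd(1)] xcd v by (cases j) auto
    qed
    moreover have "free_occ v (Suc i) (swap c d y)" using free_occ_Br_tail[OF al d(1) False] y
      by simp
    ultimately have "swap c d y \<in> B" using before x unfolding free_before_in_def by blast
    then show ?thesis using d(2) c False by (auto simp: swap_def split: if_splits)
  qed simp
qed

lemma first_free_outside_in_Br_tail:
  assumes al: "alpha v (Br d # v')" and d: "d \<notin> names_str v" "d \<notin> B" "d \<notin> F" and c: "c \<noteq> d"
    and first: "first_free_outside_in B C (F - {c}) v"
  shows "first_free_outside_in (insert c B) (insert c C) F (rename_str (swap c d) v')"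
  unfolding first_free_outside_in_def
proof (intro allI impI, elim conjE)
  fix i y assume y: "free_occ (rename_str (swap c d) v') i y" "y \<notin> insert c B" "y \<in> F"
    and before: "\<forall>j<i. \<forall>e. free_occ (rename_str (swap c d) v') j e \<longrightarrow> e \<in> insert c B"
  obtain b v0 where v: "v = Br b # v0" using al alpha_starts_with_Br by blast
  have "y \<noteq> c" "y \<noteq> d" using y d(3) by auto
  then have "free_occ v (Suc i) y" using free_occ_Br_tail[OF al d(1)] y(1) by simp
  moreover have "e \<in> B" if j: "j < Suc i" and occ: "free_occ v j e" for j e
  proof -
    obtain k where k: "j = Suc k" "k < i" using j occ v by (cases j) auto
    have "e \<noteq> d" using d(1) occ free_occ_in_names by blast
    then show "e \<in> B"
      using before k occ c d(2)
        free_occ_Br_tail[OF al d(1), where y = "swap c d e" and c = c and i = k]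
      by (cases "e = c") auto
  qed
  ultimately have "y \<in> C" using first y unfolding first_free_outside_in_def by blast
  then show "y \<in> insert c C" by simp
qed

lemma sat_restr_Br:
  assumes M: "M \<in> {Dia, Box}" and "finite B" and a: "set_option a \<inter> B = {}"
    and c: "c \<notin> B \<union> set_option a" "c = b \<or> c \<notin> names_form p"
    and before: "free_before_in B a v" and first: "first_free_outside_in B C (FN (M (Br b) p)) v"
    and IH: "\<And>u. free_before_in (insert c B) a u \<Longrightarrow>
               first_free_outside_in (insert c B) (insert c C) (FN (rename_form (swap b c) p)) u \<Longrightarrow>
               length u < length v \<Longrightarrow> sat S u (rename_form (swap b c) p) \<longleftrightarrow> sat S u r"
  shows "sat S v (M (Br b) p) \<longleftrightarrow> sat S v (M (Br c) r)"
proof -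
  let ?p = "rename_form (swap b c) p"
  have "sat S v (M (Br b) p) \<longleftrightarrow> sat S v (M (Br c) ?p)"
    using sat_alpha_form alpha_form_Br_rename[OF M c(2)] alpha_form_sym by blast
  also have "\<dots> \<longleftrightarrow> sat S v (M (Br c) r)"
  proof (rule sat_Br_cong[OF M])
    let ?F = "B \<union> set_option a \<union> {c} \<union> names_form ?p \<union> names_form r \<union> names_str v"
    show "finite ?F" using \<open>finite B\<close> by simp
    show "names_form ?p \<union> names_form r \<subseteq> ?F" by blast
    fix d v' assume d: "d \<notin> ?F" and al: "alpha v (Br d # v')"
    have FN_eq: "FN ?p - {c} = FN (M (Br b) p)"
      using c(2) FN_rename_swap_fresh[of c p b] M by (cases "c = b") auto
    have "free_before_in (insert c B) a (rename_str (swap c d) v')"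
      using free_before_in_Br_tail[OF al _ _ _ _ before] c d by auto
    moreover have
      "first_free_outside_in (insert c B) (insert c C) (FN ?p) (rename_str (swap c d) v')"
      using first unfolding FN_eq[symmetric]
      by (rule first_free_outside_in_Br_tail[OF al, rotated -1])
        (use d FN_subset_names_form[of ?p] in auto)
    moreover have "length (rename_str (swap c d) v') < length v"
      using alpha_length[OF al] by simp
    ultimately show "sat S (rename_str (swap c d) v') ?p \<longleftrightarrow> sat S (rename_str (swap c d) v') r"
      by (rule IH)
  qed
  finally show ?thesis .
qed

lemma sat_plain_head_in:
  "finite D \<Longrightarrow> sat S v (Or Eps (Or DiaBarTop (DiaSet D))) \<longleftrightarrow> (\<forall>d w. v = Pl d # w \<longrightarrow> d \<in> D)"
  by (cases v; cases "hd v") (auto simp: sat_DiaSet sat_DiaBarTop)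

lemma sat_plain_head_in_or:
  "finite D \<Longrightarrow> sat S v (Or Eps (Or DiaBarTop (Or (DiaSet D) (Dia (Pl b) r)))) \<longleftrightarrow>
     (\<forall>d w. v = Pl d # w \<longrightarrow> d \<in> D \<or> (d = b \<and> sat S w r))"
  by (cases v; cases "hd v") (auto simp: sat_DiaSet sat_DiaBarTop)

lemma bind_name_fresh:
  assumes "finite B" and "finite C"
  shows "bind_name B C a b p \<notin> B \<union> C \<union> set_option a"
    and "bind_name B C a b p = b \<or> bind_name B C a b p \<notin> names_form p"
  using fresh_notin[of "B \<union> C \<union> set_option a \<union> insert b (names_form p)"] assms
  by (auto simp: bind_name_def)

lemma restr_conditions_Pl_tail:
  assumes "M \<in> {Dia, Box}" and "b \<in> B" and "set_option a \<inter> B = {}"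
    and "free_before_in B a (Pl b # w)" and "first_free_outside_in B C (FN (M (Pl b) p)) (Pl b # w)"
  shows "free_before_in B a w" and "first_free_outside_in B C (FN p) w"
  using free_before_in_Pl_tail[OF assms(2-4)]
    first_free_outside_in_mono[OF _ first_free_outside_in_Pl_tail[OF assms(2,5)]] assms(1)
  by auto

lemma sat_restr_Dia_Pl:
  assumes "B \<subseteq> C" and first: "first_free_outside_in B C (FN (Dia (Pl b) p)) v"
    and step_old: "\<And>w. b \<in> B \<Longrightarrow> v = Pl b # w \<Longrightarrow> sat S w p \<longleftrightarrow> sat S w (restr B C a m p)"
    and step_new: "\<And>w. b \<in> C \<Longrightarrow> b \<notin> B \<Longrightarrow> v = Pl b # w \<Longrightarrow>
                sat S w p \<longleftrightarrow> sat S w (restr {} (FN p) None m p)"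
  shows "sat S v (Dia (Pl b) p) \<longleftrightarrow> sat S v (restr B C a (Suc m) (Dia (Pl b) p))"
proof (cases "b \<in> C")
  case False
  then have "v \<noteq> Pl b # w" for w
    using first_free_outside_in_head[of B C _ b w] first assms(1) by auto
  then show ?thesis using False by simp
next
  case True
  show ?thesis
  proof (cases "b \<in> B")
    case True
    then have restr_eq: "restr B C a (Suc m) (Dia (Pl b) p) = Dia (Pl b) (restr B C a m p)"
      using assms(1) by auto
    show ?thesis unfolding restr_eq sat_simps using step_old[OF True] by blast
  next
    case False
    then have restr_eq: "restr B C a (Suc m) (Dia (Pl b) p) = Dia (Pl b) (restr {} (FN p) None m p)"
      using \<open>b \<in> C\<close> by auto
    show ?thesis unfolding restr_eq sat_simps using step_new[OF \<open>b \<in> C\<close> False] by blast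
  qed
qed

lemma sat_restr_Box_Pl:
  assumes "finite B" and "B \<subseteq> C"
    and before: "free_before_in B a v" and first: "first_free_outside_in B C (FN (Box (Pl b) p)) v"
    and step_old: "\<And>w. b \<in> B \<Longrightarrow> v = Pl b # w \<Longrightarrow> sat S w p \<longleftrightarrow> sat S w (restr B C a m p)"
    and step_new: "\<And>w. b \<notin> B \<Longrightarrow> a = None \<or> a = Some b \<and> b \<in> C \<Longrightarrow> v = Pl b # w \<Longrightarrow>
                sat S w p \<longleftrightarrow> sat S w (restr {} (FN p) None m p)"
  shows "sat S v (Box (Pl b) p) \<longleftrightarrow> sat S v (restr B C a (Suc m) (Box (Pl b) p))"
proof -
  have head: "d = x \<or> d \<in> B" if "a = Some x" "v = Pl d # w" for x d w
    using free_before_in_head before that by blast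
  have fin: "finite (B \<union> set_option a)" using assms(1) by simp
  consider (old) "b \<in> B" | (None) "b \<notin> B" "a = None" | (Some_b) "b \<in> C" "b \<notin> B" "a = Some b"
    | (Some_outside) x where "b \<notin> C" "a = Some x"
    | (Some_other) x where "b \<notin> B" "a = Some x" "x \<noteq> b"
    by (cases a) auto
  then show ?thesis
  proof cases
    case old
    then have restr_eq: "restr B C a (Suc m) (Box (Pl b) p) = Box (Pl b) (restr B C a m p)"
      using assms(2) by auto
    show ?thesis unfolding restr_eq sat_simps using step_old[OF old] by blast
  next
    case None
    then show ?thesis using step_new by auto
  next
    case Some_b
    then show ?thesis using step_new head assms(1)
      by (auto simp: sat_plain_head_in_or simp del: sat_simps(4))
  next
    case (Some_outside x)
    have "v \<noteq> Pl b # w" for w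
      using first_free_outside_in_head[of B C _ b w] first assms(2) Some_outside by auto
    then show ?thesis using Some_outside head fin
      by (auto simp: sat_plain_head_in simp del: sat_simps(4))
  next
    case (Some_other x)
    have "v \<noteq> Pl b # w" for w using head Some_other by blast
    then show ?thesis using Some_other head fin
      by (auto simp: sat_plain_head_in simp del: sat_simps(4))
  qed
qed

lemma sat_restr_iff:
  assumes "finite B" and "finite C" and "B \<subseteq> C" and "set_option a \<inter> B = {}"
    and "fv p = {}" and "guarded p"
    and "free_before_in B a v" and "first_free_outside_in B C (FN p) v" and "length v < n"
  shows "sat S v p \<longleftrightarrow> sat S v (restr B C a n p)"
  using assms
proof (induction B C a n p arbitrary: S v rule: restr.induct)
  case (4 B C a m p q S v)
  have "first_free_outside_in B C (FN p) v" "first_free_outside_in B C (FN q) v"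
    using first_free_outside_in_mono[OF _ "4.prems"(8)] by auto
  then show ?case using "4.IH" "4.prems" by simp
next
  case (5 B C a m p q S v)
  have "first_free_outside_in B C (FN p) v" "first_free_outside_in B C (FN q) v"
    using first_free_outside_in_mono[OF _ "5.prems"(8)] by auto
  then show ?case using "5.IH" "5.prems" by simp
next
  case (6 B C a m b p S v)
  define c where "c = bind_name B C a b p"
  have c: "c \<notin> B \<union> C \<union> set_option a" "c = b \<or> c \<notin> names_form p"
    unfolding c_def by (rule bind_name_fresh[OF "6.prems"(1,2)])+
  have "sat S v (Dia (Br b) p) \<longleftrightarrow>
        sat S v (Dia (Br c) (restr (insert c B) (insert c C) a m (rename_form (swap b c) p)))"
  proof (rule sat_restr_Br[where M = Dia])
    fix u assume "free_before_in (insert c B) a u"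
      and "first_free_outside_in (insert c B) (insert c C) (FN (rename_form (swap b c) p)) u"
      and "length u < length v"
    then show "sat S u (rename_form (swap b c) p) \<longleftrightarrow>
               sat S u (restr (insert c B) (insert c C) a m (rename_form (swap b c) p))"
      using "6.IH"[OF c_def, where S = S and v = u] "6.prems" c
        by (simp add: perm_form_eq_rename subset_insertI2)
  qed (use "6.prems" c in simp_all)
  then show ?case by (simp add: c_def Let_def perm_form_eq_rename)
next
  case (7 B C a m b p S v)
  define c where "c = bind_name B C a b p"
  have c: "c \<notin> B \<union> C \<union> set_option a" "c = b \<or> c \<notin> names_form p"
    unfolding c_def by (rule bind_name_fresh[OF "7.prems"(1,2)])+
  have "sat S v (Box (Br b) p) \<longleftrightarrow>
        sat S v (Box (Br c) (restr (insert c B) (insert c C) a m (rename_form (swap b c) p)))"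
  proof (rule sat_restr_Br[where M = Box])
    fix u assume "free_before_in (insert c B) a u"
      and "first_free_outside_in (insert c B) (insert c C) (FN (rename_form (swap b c) p)) u"
      and "length u < length v"
    then show "sat S u (rename_form (swap b c) p) \<longleftrightarrow>
               sat S u (restr (insert c B) (insert c C) a m (rename_form (swap b c) p))"
      using "7.IH"[OF c_def, where S = S and v = u] "7.prems" c
        by (simp add: perm_form_eq_rename subset_insertI2)
  qed (use "7.prems" c in simp_all)
  then show ?case by (simp add: c_def Let_def perm_form_eq_rename)
next
  case (8 B C a m X p S v)
  have guarded_X: "\<not> unguarded X p" using "8.prems"(6) by simp
  have "fv (subst (Mu X p) X p) = {}" using fv_subst[of "Mu X p" X p] "8.prems"(5) by auto
  moreover have "guarded (subst (Mu X p) X p)" using guarded_subst[of p "Mu X p" X] "8.prems"(5,6)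
    by simp
  moreover have "first_free_outside_in B C (FN (subst (Mu X p) X p)) v"
    using first_free_outside_in_mono[OF _ "8.prems"(8)] FN_subst[of "Mu X p" X p] by auto
  ultimately have
    "sat S v (subst (Mu X p) X p) \<longleftrightarrow> sat S v (restr B C a (Suc m) (subst (Mu X p) X p))"
    using "8.IH"[OF guarded_X] "8.prems" by blast
  then show ?case using guarded_X by (simp add: sat_Mu_iff)
next
  case (10 B C a m b p S v)
  show ?case
  proof (rule sat_restr_Dia_Pl[OF "10.prems"(3,8)])
    fix w assume "b \<in> B" and v: "v = Pl b # w"
    then show "sat S w p \<longleftrightarrow> sat S w (restr B C a m p)"
      using "10.IH"(1) "10.prems" restr_conditions_Pl_tail[of Dia b B a w] by auto
  next
    fix w assume "b \<in> C" "b \<notin> B" "v = Pl b # w"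
    then show "sat S w p \<longleftrightarrow> sat S w (restr {} (FN p) None m p)"
      using "10.IH"(2) "10.prems" by auto
  qed
next
  case (11 B C a m b p S v)
  show ?case
  proof (rule sat_restr_Box_Pl[OF "11.prems"(1,3,7,8)])
    fix w assume "b \<in> B" and v: "v = Pl b # w"
    then show "sat S w p \<longleftrightarrow> sat S w (restr B C a m p)"
      using "11.IH"(2) "11.prems" restr_conditions_Pl_tail[of Box b B a w] by auto
  next
    fix w assume "b \<notin> B" "a = None \<or> a = Some b \<and> b \<in> C" "v = Pl b # w"
    then show "sat S w p \<longleftrightarrow> sat S w (restr {} (FN p) None m p)"
      using "11.IH"(1,3,4) "11.prems" by (cases "b \<in> C") auto
  qed
qed simp_all

theorem lemma6p3:
  fixes B C S :: "name set" and a :: "name option" and phi :: form and v :: bstr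
  assumes "finite B" and "finite C" and "B \<subseteq> C"
    and "\<forall>x. a = Some x \<longrightarrow> x \<notin> B"
    and "finite S"
    and "bar_formula phi"
    and "FN phi \<subseteq> S" and "FN_str v \<subseteq> S"
    and "\<forall>x. a = Some x \<longrightarrow>
           (\<forall>i d. free_occ v i d \<and> (\<forall>j\<le>i. \<not> free_occ v j x) \<longrightarrow> d \<in> B)"
    and "\<forall>i d. free_occ v i d \<and> d \<notin> B \<and> (\<forall>j<i. \<forall>e. free_occ v j e \<longrightarrow> e \<in> B)
           \<and> d \<in> FN phi \<longrightarrow> d \<in> C"
  shows "\<forall>n. length v < n \<longrightarrow> (sat S v phi \<longleftrightarrow> sat S v (restr B C a n phi))"
proof (intro allI impI)
  fix n assume "length v < n"
  moreover have "fv phi = {}" and "guarded phi" using assms(6) by (simp_all add: bar_formula_def)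
  ultimately show "sat S v phi \<longleftrightarrow> sat S v (restr B C a n phi)"
    using assms(1-4,9,10)
    by (intro sat_restr_iff) (auto simp: free_before_in_def first_free_outside_in_def)
qed

end
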